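(* Let $k\ge1$ be an integer and $\rho\in(0,1)$, and let $\tilde\varepsilon=\rho\,\frac{1+\cos(\frac{2k-1}{2k}\pi)}{1-\cos(\frac{2k-1}{2k}\pi)}$. For $\varepsilon\in[0,\tilde\varepsilon]$ let $p_\varepsilon(X)=T_k\big(\frac{2X}{\rho+\varepsilon}-\frac{\rho-\varepsilon}{\rho+\varepsilon}\big)$ and write $p_\varepsilon(X)=\sum_{i=0}^kc_iX^i$. Then: (i) $\operatorname{sign}(c_i)=(-1)^{k-i}$ for $i=1,\dots,k$, and $(-1)^kc_0\ge0$; (ii) on $[-\varepsilon,\rho]$, $|p_\varepsilon|$ attains its maximum at the points $m_i=\frac{(\rho+\varepsilon)\cos(\frac{i\pi}{k})+\rho-\varepsilon}{2}\in[-\varepsilon,\rho]$, $i=0,\dots,k$, and $p_\varepsilon(m_i)=(-1)^i$.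
   Context: $T_k$ is the Chebyshev polynomial of the first kind of degree $k$, i.e. $T_k(\cos\theta)=\cos(k\theta)$. *)

theory Defs
  imports "HOL-Computational_Algebra.Polynomial" "HOL-Analysis.Analysis"
begin

fun cheb_T :: "nat \<Rightarrow> real poly" where
  "cheb_T 0 = 1"
| "cheb_T (Suc 0) = [:0, 1:]"
| "cheb_T (Suc (Suc n)) = [:0, 2:] * cheb_T (Suc n) - cheb_T n"

definition p_eps :: "nat \<Rightarrow> real \<Rightarrow> real \<Rightarrow> real poly" where
  "p_eps k \<rho> \<epsilon> = pcompose (cheb_T k) [: -((\<rho> - \<epsilon>) / (\<rho> + \<epsilon>)), 2 / (\<rho> + \<epsilon>) :]"

end

(*
  Everything comes from T_k (cos t) = cos (k t). The affine substitution
  z = (2 x - rho + eps) / (rho + eps) maps [-eps, rho] onto [-1, 1] and m_i to cos (i pi / k),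
  where T_k takes the value (-1)^i, while |T_k| <= 1 on [-1, 1].

  For the signs, T_k = 2^(k-1) prod_j (X - cos ((2j+1) pi / (2k))), so p_eps is a positive
  multiple of prod_j (X - x_j), where x_j are the images of the Chebyshev nodes. The bound on
  eps says exactly that the smallest root x_(k-1) is nonnegative, and then all other roots are
  positive. A monic polynomial with positive roots has strictly alternating coefficients, and
  one more factor X - x with x >= 0 keeps the strict alternation except in the constant term.
*)
theory Submission
  imports Defs
begin

lemma poly_cheb_T_cos: "poly (cheb_T n) (cos t) = cos (real n * t)"
proof (induction n rule: cheb_T.induct)
  case (3 n)
  have "cos (real (Suc (Suc n)) * t) = 2 * cos t * cos (real (Suc n) * t) - cos (real n * t)"
    using cos_times_cos[of t "real (Suc n) * t"] by (simp add: algebra_simps)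
  with 3 show ?case by simp
qed simp_all

lemma abs_poly_cheb_T_le_1:
  assumes "\<bar>z\<bar> \<le> 1"
  shows "\<bar>poly (cheb_T n) z\<bar> \<le> 1"
  using poly_cheb_T_cos[of n "arccos z"] assms by simp

lemma degree_cheb_T_le: "degree (cheb_T n) \<le> n"
proof (induction n rule: cheb_T.induct)
  case (3 n)
  have "degree ([:0, 2:] * cheb_T (Suc n)) \<le> Suc (Suc n)"
    using degree_mult_le[of "[:0, 2:]" "cheb_T (Suc n)"] 3 by simp
  with 3 show ?case by (simp add: degree_diff_le)
qed simp_all

lemma coeff_cheb_T_self: "coeff (cheb_T n) n = (if n = 0 then 1 else 2 ^ (n - 1))"
proof (induction n rule: cheb_T.induct)
  case (3 n)
  have "coeff (cheb_T n) (Suc (Suc n)) = 0"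
    using degree_cheb_T_le[of n] by (intro coeff_eq_0) simp
  with 3 show ?case by simp
qed simp_all

lemma degree_prod_linear_factors: "degree (\<Prod>j<m. [:- x j, 1::'a::idom:]) = m"
  by (simp add: degree_prod_eq_sum_degree)

lemma prod_linear_factors_dvd:
  fixes p :: "'a::idom poly" and m :: nat
  assumes "inj_on r {..<m}" and "\<And>j. j < m \<Longrightarrow> poly p (r j) = 0"
  shows "(\<Prod>j<m. [:- r j, 1:]) dvd p"
  using assms
proof (induction m)
  case (Suc m)
  let ?P = "\<Prod>j<m. [:- r j, 1:]"
  have "inj_on r {..<m}"
    using Suc.prems(1) by (rule inj_on_subset) auto
  with Suc have "?P dvd p"
    by simp
  then obtain q where q: "p = ?P * q"
    by (rule dvdE)
  have "r m \<noteq> r j" if "j < m" for j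
    using inj_onD[OF Suc.prems(1), of m j] that by auto
  then have "poly ?P (r m) \<noteq> 0"
    by (simp add: poly_prod)
  moreover have "poly p (r m) = 0"
    using Suc.prems(2) by simp
  ultimately have "[:- r m, 1:] dvd q"
    using q by (simp add: poly_eq_0_iff_dvd)
  then have "?P * [:- r m, 1:] dvd p"
    unfolding q by (rule mult_dvd_mono[OF dvd_refl])
  then show ?case
    by simp
qed simp

lemma smult_prod_linear_factors_eq:
  fixes p :: "'a::idom poly" and m :: nat
  assumes "degree p \<le> m" and "inj_on r {..<m}" and "\<And>j. j < m \<Longrightarrow> poly p (r j) = 0"
  shows "p = smult (coeff p m) (\<Prod>j<m. [:- r j, 1:])"
proof (cases "p = 0")
  case False
  let ?P = "\<Prod>j<m. [:- r j, 1:]"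
  obtain q where q: "p = ?P * q"
    using prod_linear_factors_dvd[OF assms(2,3)] by (rule dvdE)
  have "lead_coeff ?P = 1"
    by (simp add: lead_coeff_prod)
  then have P_coeff: "coeff ?P m = 1"
    by (simp add: degree_prod_linear_factors)
  from q False have "degree p = m + degree q"
    by (auto simp: degree_mult_eq degree_prod_linear_factors)
  with assms(1) obtain c where "q = [:c:]"
    by (metis add_le_same_cancel1 le_zero_eq degree_eq_zeroE)
  with q P_coeff show ?thesis
    by simp
qed simp

definition cheb_node :: "nat \<Rightarrow> nat \<Rightarrow> real" where
  "cheb_node k j = cos ((2 * real j + 1) * pi / (2 * real k))"

lemma poly_cheb_T_cheb_node:
  assumes "0 < k"
  shows "poly (cheb_T k) (cheb_node k j) = 0"
proof -
  have "real k * ((2 * real j + 1) * pi / (2 * real k)) = real (2 * j + 1) * (pi / 2)"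
    using assms by (simp add: field_simps)
  moreover have "cos (real (2 * j + 1) * (pi / 2)) = 0"
    unfolding cos_zero_iff by (rule disjI1, rule exI[of _ "2 * j + 1"]) simp
  ultimately show ?thesis
    unfolding cheb_node_def poly_cheb_T_cos by metis
qed

lemma cheb_node_angle_bounds:
  assumes "j < k"
  shows "0 < (2 * real j + 1) * pi / (2 * real k)" and "(2 * real j + 1) * pi / (2 * real k) < pi"
proof -
  show "0 < (2 * real j + 1) * pi / (2 * real k)"
    using assms by simp
  have "(2 * real j + 1) * pi < (2 * real k) * pi"
    using assms by (intro mult_strict_right_mono) auto
  then show "(2 * real j + 1) * pi / (2 * real k) < pi"
    using assms by (simp add: divide_less_eq)
qed

lemma cheb_node_strict_antimono:
  assumes "j < j'" and "j' < k"
  shows "cheb_node k j' < cheb_node k j"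
  unfolding cheb_node_def using assms cheb_node_angle_bounds[of j k] cheb_node_angle_bounds[of j' k]
  by (intro cos_monotone_0_pi) (auto simp: divide_strict_right_mono)

lemma cheb_node_less_1:
  assumes "j < k"
  shows "cheb_node k j < 1"
  using cos_monotone_0_pi[of 0 "(2 * real j + 1) * pi / (2 * real k)"] cheb_node_angle_bounds[OF assms]
  unfolding cheb_node_def by simp

lemma cheb_T_eq_smult_prod_nodes:
  assumes "0 < k"
  shows "cheb_T k = smult (2 ^ (k - 1)) (\<Prod>j<k. [:- cheb_node k j, 1:])"
proof -
  have "inj_on (cheb_node k) {..<k}"
    by (intro linorder_inj_onI') (auto dest: cheb_node_strict_antimono)
  moreover have "coeff (cheb_T k) k = 2 ^ (k - 1)"
    using assms by (simp add: coeff_cheb_T_self)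
  ultimately show ?thesis
    using smult_prod_linear_factors_eq[OF degree_cheb_T_le] poly_cheb_T_cheb_node[OF assms]
    by metis
qed

lemma pcompose_prod_linear_factors:
  fixes a b :: "'a::comm_ring_1"
  assumes "\<And>j. y j = a * z j + b"
  shows "pcompose (\<Prod>j<m. [:- y j, 1:]) [:b, a:] = smult (a ^ m) (\<Prod>j<m. [:- z j, 1:])"
proof -
  have factor: "pcompose [:- y j, 1:] [:b, a:] = smult a [:- z j, 1:]" for j
    using assms[of j] by (simp add: pcompose_pCons algebra_simps)
  show ?thesis
    unfolding pcompose_prod factor prod_smult by simp
qed

definition p_eps_root :: "nat \<Rightarrow> real \<Rightarrow> real \<Rightarrow> nat \<Rightarrow> real" where
  "p_eps_root k \<rho> \<epsilon> j = ((\<rho> + \<epsilon>) * cheb_node k j + \<rho> - \<epsilon>) / 2"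

lemma poly_p_eps: "poly (p_eps k \<rho> \<epsilon>) x = poly (cheb_T k) ((2 * x - \<rho> + \<epsilon>) / (\<rho> + \<epsilon>))"
proof -
  have "poly [:- ((\<rho> - \<epsilon>) / (\<rho> + \<epsilon>)), 2 / (\<rho> + \<epsilon>):] x = (2 * x - \<rho> + \<epsilon>) / (\<rho> + \<epsilon>)"
    by (simp add: diff_divide_distrib add_divide_distrib)
  then show ?thesis
    by (simp add: p_eps_def poly_pcompose)
qed

lemma p_eps_eq_smult_prod_roots:
  assumes "0 < k" and "\<rho> + \<epsilon> \<noteq> 0"
  shows "p_eps k \<rho> \<epsilon> = smult (2 ^ (k - 1) * (2 / (\<rho> + \<epsilon>)) ^ k) (\<Prod>j<k. [:- p_eps_root k \<rho> \<epsilon> j, 1:])"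
proof -
  have nodes: "cheb_node k j = 2 / (\<rho> + \<epsilon>) * p_eps_root k \<rho> \<epsilon> j + - ((\<rho> - \<epsilon>) / (\<rho> + \<epsilon>))" for j
    using assms(2) by (simp add: p_eps_root_def add_divide_distrib diff_divide_distrib)
  show ?thesis
    unfolding p_eps_def cheb_T_eq_smult_prod_nodes[OF assms(1)] pcompose_smult
      pcompose_prod_linear_factors[OF nodes] smult_smult ..
qed

lemma p_eps_root_strict_antimono:
  assumes "0 < \<rho> + \<epsilon>" and "j < j'" and "j' < k"
  shows "p_eps_root k \<rho> \<epsilon> j' < p_eps_root k \<rho> \<epsilon> j"
  using mult_strict_left_mono[OF cheb_node_strict_antimono[OF assms(2,3)] assms(1)]
  unfolding p_eps_root_def by simp

lemma coeff_linear_mult_alternating: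
  fixes Q :: "real poly"
  assumes "0 \<le> x" and "degree Q \<le> m" and alternating: "\<forall>i\<le>m. 0 < (-1) ^ (m - i) * coeff Q i"
    and "0 < i" and "i \<le> Suc m"
  shows "0 < (-1) ^ (Suc m - i) * coeff ([:- x, 1:] * Q) i"
proof -
  obtain i' where i': "i = Suc i'" "i' \<le> m"
    using assms(4,5) by (cases i) auto
  have "0 \<le> x * ((-1) ^ (m - i) * coeff Q i)"
  proof (cases "i \<le> m")
    case True
    then show ?thesis
      using alternating assms(1) by (simp add: less_imp_le)
  next
    case False
    then show ?thesis
      using assms(2) by (simp add: coeff_eq_0)
  qed
  moreover have "(-1) ^ (Suc m - i) * coeff ([:- x, 1:] * Q) i
      = (-1) ^ (m - i') * coeff Q i' + x * ((-1) ^ (m - i) * coeff Q i)"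
  proof (cases "i \<le> m")
    case True
    then have "m - i' = Suc (m - i)"
      using i'(1) by simp
    then have "(-1) ^ (m - i') = - ((-1) ^ (m - i) :: real)"
      by simp
    then show ?thesis
      using i' by (simp add: coeff_pCons' algebra_simps)
  next
    case False
    then show ?thesis
      using i' assms(2) by (simp add: coeff_pCons' coeff_eq_0)
  qed
  moreover have "0 < (-1) ^ (m - i') * coeff Q i'"
    using alternating i'(2) by simp
  ultimately show ?thesis
    by linarith
qed

lemma coeff_prod_linear_alternating:
  fixes x :: "nat \<Rightarrow> real"
  assumes "\<And>j. j < m \<Longrightarrow> 0 < x j" and "i \<le> m"
  shows "0 < (-1) ^ (m - i) * coeff (\<Prod>j<m. [:- x j, 1:]) i"
  using assms
proof (induction m arbitrary: i)
  case 0
  then show ?case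
    by simp
next
  case (Suc m)
  let ?Q = "\<Prod>j<m. [:- x j, 1:]"
  have alternating: "\<forall>i\<le>m. 0 < (-1) ^ (m - i) * coeff ?Q i"
    using Suc by simp
  have product: "(\<Prod>j<Suc m. [:- x j, 1:]) = [:- x m, 1:] * ?Q"
    by (simp add: mult.commute)
  show ?case
  proof (cases "i = 0")
    case True
    have "0 < (-1) ^ m * coeff ?Q 0" and "0 < x m"
      using alternating[rule_format, of 0] Suc.prems(1) by simp_all
    then have "0 < x m * ((-1) ^ m * coeff ?Q 0)"
      by simp
    then show ?thesis
      unfolding product True by (simp add: mult.left_commute)
  next
    case False
    then show ?thesis
      unfolding product using Suc.prems alternating less_imp_le[OF Suc.prems(1)[of m]]
      by (intro coeff_linear_mult_alternating) (simp_all add: degree_prod_linear_factors)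
  qed
qed

lemma sgn_eq_neg_one_power:
  fixes c :: real
  assumes "0 < (-1) ^ n * c"
  shows "sgn c = (-1) ^ n"
  using assms by (cases "even n") (simp_all add: zero_less_mult_iff)

lemma p_eps_coeff_signs:
  assumes "0 < \<rho> + \<epsilon>" and last_root: "0 \<le> p_eps_root (Suc n) \<rho> \<epsilon> n"
  shows "\<forall>i\<in>{1..Suc n}. sgn (coeff (p_eps (Suc n) \<rho> \<epsilon>) i) = (-1) ^ (Suc n - i)"
    and "0 \<le> (-1) ^ Suc n * coeff (p_eps (Suc n) \<rho> \<epsilon>) 0"
proof -
  let ?x = "p_eps_root (Suc n) \<rho> \<epsilon>"
  let ?Q = "\<Prod>j<n. [:- ?x j, 1:]"
  define C where "C = 2 ^ n * (2 / (\<rho> + \<epsilon>)) ^ Suc n"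
  have C: "0 < C"
    using assms(1) by (simp add: C_def)
  have "p_eps (Suc n) \<rho> \<epsilon> = smult C ([:- ?x n, 1:] * ?Q)"
    using p_eps_eq_smult_prod_roots[of "Suc n"] assms(1) unfolding C_def
    by (simp add: mult.commute)
  then have coeff_p: "coeff (p_eps (Suc n) \<rho> \<epsilon>) i = C * coeff ([:- ?x n, 1:] * ?Q) i" for i
    by simp
  have "0 < ?x j" if "j < n" for j
    using p_eps_root_strict_antimono[OF assms(1) that, of "Suc n"] last_root by simp
  then have alternating: "\<forall>i\<le>n. 0 < (-1) ^ (n - i) * coeff ?Q i"
    by (simp add: coeff_prod_linear_alternating)
  show "\<forall>i\<in>{1..Suc n}. sgn (coeff (p_eps (Suc n) \<rho> \<epsilon>) i) = (-1) ^ (Suc n - i)"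
  proof
    fix i
    assume "i \<in> {1..Suc n}"
    then have "0 < (-1) ^ (Suc n - i) * coeff ([:- ?x n, 1:] * ?Q) i"
      by (intro coeff_linear_mult_alternating[OF last_root _ alternating])
        (simp_all add: degree_prod_linear_factors)
    with C have "0 < (-1) ^ (Suc n - i) * coeff (p_eps (Suc n) \<rho> \<epsilon>) i"
      unfolding coeff_p by (metis mult.left_commute mult_pos_pos)
    then show "sgn (coeff (p_eps (Suc n) \<rho> \<epsilon>) i) = (-1) ^ (Suc n - i)"
      by (rule sgn_eq_neg_one_power)
  qed
  have "(-1) ^ Suc n * coeff (p_eps (Suc n) \<rho> \<epsilon>) 0 = C * (?x n * ((-1) ^ n * coeff ?Q 0))"
    unfolding coeff_p by simp
  moreover have "0 < (-1) ^ n * coeff ?Q 0"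
    using alternating[rule_format, of 0] by simp
  ultimately show "0 \<le> (-1) ^ Suc n * coeff (p_eps (Suc n) \<rho> \<epsilon>) 0"
    using C last_root by simp
qed

lemma cos_rescaled_mem_interval:
  fixes \<rho> \<epsilon> t :: real
  assumes "0 \<le> \<rho> + \<epsilon>"
  shows "((\<rho> + \<epsilon>) * cos t + \<rho> - \<epsilon>) / 2 \<in> {-\<epsilon>..\<rho>}"
proof -
  have "\<bar>(\<rho> + \<epsilon>) * cos t\<bar> \<le> \<rho> + \<epsilon>"
    using assms mult_right_le_one_le[of "\<rho> + \<epsilon>" "\<bar>cos t\<bar>"] by (simp add: abs_mult)
  then show ?thesis
    by (simp add: abs_le_iff)
qed

lemma poly_p_eps_extremal_point:
  assumes "0 < k" and "\<rho> + \<epsilon> \<noteq> 0"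
  shows "poly (p_eps k \<rho> \<epsilon>) (((\<rho> + \<epsilon>) * cos (real i * pi / real k) + \<rho> - \<epsilon>) / 2) = (-1) ^ i"
proof -
  have "(2 * (((\<rho> + \<epsilon>) * cos (real i * pi / real k) + \<rho> - \<epsilon>) / 2) - \<rho> + \<epsilon>) / (\<rho> + \<epsilon>)
      = cos (real i * pi / real k)"
    using assms(2) by (simp add: field_simps)
  moreover have "real k * (real i * pi / real k) = real i * pi"
    using assms(1) by simp
  ultimately show ?thesis
    unfolding poly_p_eps by (simp add: poly_cheb_T_cos)
qed

lemma abs_poly_p_eps_le_1:
  assumes "0 < \<rho> + \<epsilon>" and "x \<in> {-\<epsilon>..\<rho>}"
  shows "\<bar>poly (p_eps k \<rho> \<epsilon>) x\<bar> \<le> 1"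
proof -
  have "\<bar>(2 * x - \<rho> + \<epsilon>) / (\<rho> + \<epsilon>)\<bar> \<le> 1"
    using assms by (simp add: abs_le_iff divide_le_eq le_divide_eq)
  then show ?thesis
    unfolding poly_p_eps by (rule abs_poly_cheb_T_le_1)
qed

lemma p_eps_root_last_nonneg:
  assumes "0 < k"
    and "\<epsilon> \<le> \<rho> * (1 + cos ((2 * real k - 1) / (2 * real k) * pi))
                      / (1 - cos ((2 * real k - 1) / (2 * real k) * pi))"
  shows "0 \<le> p_eps_root k \<rho> \<epsilon> (k - 1)"
proof -
  define c where "c = cheb_node k (k - 1)"
  have "c = cos ((2 * real k - 1) / (2 * real k) * pi)"
    using assms(1) by (simp add: c_def cheb_node_def algebra_simps)
  moreover have "c < 1"
    using assms(1) by (simp add: c_def cheb_node_less_1)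
  ultimately have "\<epsilon> * (1 - c) \<le> \<rho> * (1 + c)"
    using assms(2) by (simp add: le_divide_eq)
  then show ?thesis
    unfolding p_eps_root_def c_def[symmetric] by (simp add: algebra_simps)
qed

theorem lemma6:
  fixes k :: nat and \<rho> \<epsilon> :: real
  assumes "k \<ge> 1" and "0 < \<rho>" and "\<rho> < 1"
    and "0 \<le> \<epsilon>"
    and "\<epsilon> \<le> \<rho> * (1 + cos ((2 * real k - 1) / (2 * real k) * pi))
                      / (1 - cos ((2 * real k - 1) / (2 * real k) * pi))"
  shows "(\<forall>i\<in>{1..k}. sgn (coeff (p_eps k \<rho> \<epsilon>) i) = (-1) ^ (k - i))
       \<and> (-1) ^ k * coeff (p_eps k \<rho> \<epsilon>) 0 \<ge> 0
       \<and> (\<forall>i\<in>{0..k}.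
            let m = ((\<rho> + \<epsilon>) * cos (real i * pi / real k) + \<rho> - \<epsilon>) / 2 in
              m \<in> {-\<epsilon>..\<rho>}
            \<and> poly (p_eps k \<rho> \<epsilon>) m = (-1) ^ i
            \<and> (\<forall>x\<in>{-\<epsilon>..\<rho>}. \<bar>poly (p_eps k \<rho> \<epsilon>) x\<bar> \<le> \<bar>poly (p_eps k \<rho> \<epsilon>) m\<bar>))"
proof -
  obtain n where k: "k = Suc n"
    using assms(1) by (cases k) auto
  have s: "0 < \<rho> + \<epsilon>"
    using assms(2,4) by simp
  have "0 \<le> p_eps_root k \<rho> \<epsilon> (k - 1)"
    using p_eps_root_last_nonneg[OF _ assms(5)] k by simp
  then have signs: "\<forall>i\<in>{1..k}. sgn (coeff (p_eps k \<rho> \<epsilon>) i) = (-1) ^ (k - i)"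
      "0 \<le> (-1) ^ k * coeff (p_eps k \<rho> \<epsilon>) 0"
    using p_eps_coeff_signs[OF s] unfolding k by simp_all
  show ?thesis
    using signs cos_rescaled_mem_interval[OF less_imp_le[OF s]] poly_p_eps_extremal_point[of k]
      abs_poly_p_eps_le_1[OF s] s k
    by (simp add: Let_def)
qed

end
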